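(* Let $\mathfrak{C}$ be a chromosome-set. For every finite substring $s$ of $\mathfrak{C}$ there exists a unique MES for $\mathfrak{C}$, denoted $MES(s)$, such that $s$ occurs exactly once in $MES(s)$ and every occurrence of $s$ in an element of $\mathfrak{C}$ extends to an occurrence of $MES(s)$ (i.e. lies, at the position of this unique occurrence, inside an occurrence of $MES(s)$ in the same element).
   Context: All strings are over a fixed finite alphabet $\Sigma$. A cyclic string is a bi-infinite periodic word $\mathbb{Z}\to\Sigma$ up to shift, with least period $d$. A finite string is a substring of a cyclic string $c$ if it is a contiguous block of $c$; its occurrences in $c$ are counted by start positions modulo $d$; a cyclic string is a substring only of itself. A chromosome-set is a (possibly infinite) set of cyclic strings; a string is a substring of it if it is a substring of one of its elements. A (finite or cyclic) string $s$ is a multiplicity-extremal substring (MES) for $\mathfrak{C}$ if $s$ is a substring of $\mathfrak{C}$ and every proper superstring $t$ of $s$ (a string $t\neq s$ containing $s$ as a substring) has, in at least one element of $\mathfrak{C}$, strictly fewer occurrences than $s$. *)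

theory Defs
  imports Main
begin

text \<open>A cyclic string is represented canonically as the shift-orbit of a periodic
bi-infinite word \<open>int \<Rightarrow> 'a\<close>; thus two cyclic strings are equal iff they
are equal up to shift.\<close>

definition shift :: "(int \<Rightarrow> 'a) \<Rightarrow> int \<Rightarrow> (int \<Rightarrow> 'a)" where
  "shift f k = (\<lambda>i. f (i + k))"

definition is_cyclic :: "(int \<Rightarrow> 'a) set \<Rightarrow> bool" where
  "is_cyclic S \<longleftrightarrow> (\<exists>f p. p > (0::int) \<and> (\<forall>i. f (i + p) = f i) \<and> S = range (shift f))"

definition per :: "(int \<Rightarrow> 'a) \<Rightarrow> nat" where
  "per f = (LEAST p::nat. p > 0 \<and> (\<forall>i. f (i + int p) = f i))"

definition rep :: "(int \<Rightarrow> 'a) set \<Rightarrow> (int \<Rightarrow> 'a)" where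
  "rep S = (SOME f. f \<in> S)"

datatype 'a str = Fin "'a list" | Cyc "(int \<Rightarrow> 'a) set"

fun wf_str :: "'a str \<Rightarrow> bool" where
  "wf_str (Fin u) = True"
| "wf_str (Cyc S) = is_cyclic S"

definition occurs_at :: "'a list \<Rightarrow> (int \<Rightarrow> 'a) \<Rightarrow> int \<Rightarrow> bool" where
  "occurs_at s f i \<longleftrightarrow> (\<forall>j<length s. f (i + int j) = s ! j)"

definition occurs_at_list :: "'a list \<Rightarrow> 'a list \<Rightarrow> nat \<Rightarrow> bool" where
  "occurs_at_list s u k \<longleftrightarrow> k + length s \<le> length u \<and> (\<forall>j<length s. u ! (k + j) = s ! j)"

fun substr :: "'a str \<Rightarrow> 'a str \<Rightarrow> bool" where
  "substr (Fin s) (Fin u) = (\<exists>xs ys. u = xs @ s @ ys)"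
| "substr (Fin s) (Cyc S) = (\<exists>f\<in>S. \<exists>i. occurs_at s f i)"
| "substr (Cyc T) (Fin u) = False"
| "substr (Cyc T) (Cyc S) = (T = S)"

fun occ_fin :: "'a list \<Rightarrow> 'a str \<Rightarrow> nat" where
  "occ_fin s (Fin u) = card {k. occurs_at_list s u k}"
| "occ_fin s (Cyc S) =
     card {i::int. 0 \<le> i \<and> i < int (per (rep S)) \<and> occurs_at s (rep S) i}"

fun occ :: "'a str \<Rightarrow> (int \<Rightarrow> 'a) set \<Rightarrow> nat" where
  "occ (Fin s) S = occ_fin s (Cyc S)"
| "occ (Cyc T) S = (if T = S then 1 else 0)"

definition chromosome_set :: "(int \<Rightarrow> 'a) set set \<Rightarrow> bool" where
  "chromosome_set C \<longleftrightarrow> (\<forall>S\<in>C. is_cyclic S)"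

definition substr_of :: "'a str \<Rightarrow> (int \<Rightarrow> 'a) set set \<Rightarrow> bool" where
  "substr_of t C \<longleftrightarrow> (\<exists>S\<in>C. substr t (Cyc S))"

definition MES :: "(int \<Rightarrow> 'a) set set \<Rightarrow> 'a str \<Rightarrow> bool" where
  "MES C s \<longleftrightarrow> wf_str s \<and> substr_of s C \<and>
     (\<forall>t. wf_str t \<and> t \<noteq> s \<and> substr s t \<longrightarrow> (\<exists>S\<in>C. occ t S < occ s S))"

text \<open>For cyclic \<open>m\<close>, an occurrence of \<open>m\<close> in the cyclic string of \<open>f\<close> means that
  \<open>f\<close> represents \<open>m\<close>.\<close>
fun extends_to :: "'a list \<Rightarrow> (int \<Rightarrow> 'a) \<Rightarrow> int \<Rightarrow> 'a str \<Rightarrow> bool" where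
  "extends_to s f i (Fin u) =
     (\<exists>k. occurs_at_list s u k \<and> occurs_at u f (i - int k))"
| "extends_to s f i (Cyc T) = (f \<in> T)"

end

theory Submission
  imports Defs
begin

text \<open>
Identify an occurrence of \<open>s\<close> in a chromosome with the representative word that carries it
at position 0 (an aligned word). If there is only one aligned word, its chromosome is the MES
of \<open>s\<close>: a cyclic string has no proper superstrings, and a finite string around \<open>s\<close> occurs in
no other chromosome and at most once in this one. Otherwise two distinct aligned words are
distinct periodic words, which cannot agree on a half-line, so the maximal window \<open>[-l, r)\<close>
around position 0 on which all aligned words agree is finite. The word read off this window
contains \<open>s\<close> exactly once and every occurrence of \<open>s\<close> extends to it; prolonging it by one
letter on either side reaches a position where some aligned word disagrees, so an occurrence
is lost. Any other candidate is confined to the window, hence is a substring of that word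
whose occurrences all extend to occurrences of it, and so is not extremal.
\<close>

section \<open>Shifts and periodic words\<close>

definition periodic :: "int \<Rightarrow> (int \<Rightarrow> 'a) \<Rightarrow> bool" where
  "periodic p f \<longleftrightarrow> (\<forall>i. f (i + p) = f i)"

lemma shift_apply: "shift f k i = f (i + k)"
  unfolding shift_def by simp

lemma shift_shift [simp]: "shift (shift f a) b = shift f (a + b)"
  unfolding shift_def by (simp add: ac_simps)

lemma shift_0 [simp]: "shift f 0 = f"
  unfolding shift_def by simp

lemma shift_inject: "shift f k = shift g k \<longleftrightarrow> f = g"
proof
  assume "shift f k = shift g k"
  then have "shift f k (i - k) = shift g k (i - k)" for i by simp
  then show "f = g" unfolding shift_def by auto
qed simp

lemma shift_eq_shift_iff: "shift f i = shift f j \<longleftrightarrow> periodic (j - i) f"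
proof -
  have "shift f i = shift f j \<longleftrightarrow> (\<forall>x. f (x + i) = f (x + j))"
    unfolding shift_def fun_eq_iff ..
  also have "\<dots> \<longleftrightarrow> (\<forall>y. f y = f (y + (j - i)))"
    by (metis add.commute diff_add_cancel add_diff_eq)
  finally show ?thesis unfolding periodic_def by metis
qed

lemma periodic_add_mult:
  assumes "periodic p f"
  shows "f (i + n * p) = f i"
proof (induction n rule: int_induct[where k = 0])
  case (step1 n)
  have "f (i + (n + 1) * p) = f (i + n * p + p)" by (simp add: algebra_simps)
  with step1 assms show ?case unfolding periodic_def by simp
next
  case (step2 n)
  have "f (i + n * p) = f (i + (n - 1) * p + p)" by (simp add: algebra_simps)
  with step2 assms show ?case unfolding periodic_def by simp
qed simp

lemma periodic_shift: "periodic p f \<Longrightarrow> periodic p (shift f k)"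
  unfolding periodic_def shift_def by (metis add.commute add.left_commute)

lemma periodic_mult: "periodic p f \<Longrightarrow> periodic (n * p) f"
  using periodic_add_mult unfolding periodic_def[of "n * p"] by blast

lemma periodic_mod: "periodic p f \<Longrightarrow> shift f (j mod p) = shift f j"
  unfolding shift_eq_shift_iff by (simp add: minus_mod_eq_div_mult periodic_mult)

lemma periodic_eqI_ge:
  assumes f: "periodic p f" "p > 0" and g: "periodic q g" "q > 0" and agree: "\<forall>a\<ge>c. f a = g a"
  shows "f = g"
proof
  fix a
  define N where "N = \<bar>c - a\<bar>"
  have "1 \<le> q * p" using mult_pos_pos[OF g(2) f(2)] by linarith
  then have "N * 1 \<le> N * (q * p)" unfolding N_def by (intro mult_left_mono) auto
  then have "a + N * q * p \<ge> c" unfolding N_def by (simp add: mult.assoc)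
  then have "f (a + (N * q) * p) = g (a + (N * p) * q)" using agree by (simp add: ac_simps)
  then show "f a = g a" by (simp add: periodic_add_mult[OF f(1)] periodic_add_mult[OF g(1)])
qed

lemma periodic_eqI_less:
  assumes f: "periodic p f" "p > 0" and g: "periodic q g" "q > 0" and agree: "\<forall>a<c. f a = g a"
  shows "f = g"
proof -
  have reflect: "periodic r (\<lambda>i. h (- i))" if "periodic r h" for r and h :: "int \<Rightarrow> 'a"
    unfolding periodic_def
  proof
    fix i
    have "h (- (i + r) + r) = h (- (i + r))" using that unfolding periodic_def by blast
    then show "h (- (i + r)) = h (- i)" by simp
  qed
  have "\<forall>a\<ge>1 - c. f (- a) = g (- a)" using agree by simp
  then have reflected: "(\<lambda>i. f (- i)) = (\<lambda>i. g (- i))"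
    by (rule periodic_eqI_ge[OF reflect[OF f(1)] f(2) reflect[OF g(1)] g(2)])
  show ?thesis
  proof
    show "f a = g a" for a using fun_cong[OF reflected, of "- a"] by simp
  qed
qed

lemma occurs_at_shift: "occurs_at u (shift f k) i = occurs_at u f (i + k)"
  unfolding occurs_at_def shift_def by (simp add: ac_simps)

lemma occurs_at_trans:
  assumes "occurs_at_list s u k" "occurs_at u f i"
  shows "occurs_at s f (i + int k)"
  unfolding occurs_at_def
proof (intro allI impI)
  fix j assume "j < length s"
  with assms(1) have "k + j < length u" "u ! (k + j) = s ! j"
    unfolding occurs_at_list_def by auto
  with assms(2) show "f (i + int k + int j) = s ! j"
    unfolding occurs_at_def by (metis add.assoc of_nat_add)
qed

lemma occurs_at_list_middle: "occurs_at_list u (xs @ u @ ys) (length xs)"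
  unfolding occurs_at_list_def by (simp add: nth_append)

lemma occurs_at_nested_substr:
  assumes u: "occurs_at u f i" and v: "occurs_at v f j"
    and "j \<le> i" "i + int (length u) \<le> j + int (length v)"
  shows "substr (Fin u) (Fin v)"
proof -
  define d where "d = nat (i - j)"
  have u_eq: "take (length u) (drop d v) = u"
  proof (rule nth_equalityI)
    show "length (take (length u) (drop d v)) = length u" using assms d_def by simp
    fix k assume "k < length (take (length u) (drop d v))"
    then have k: "k < length u" by simp
    then have "d + k < length v" using assms d_def by simp
    then have "v ! (d + k) = f (j + int (d + k))" using v unfolding occurs_at_def by metis
    also have "j + int (d + k) = i + int k" using assms(3) d_def by simp
    finally show "take (length u) (drop d v) ! k = u ! k" using u k \<open>d + k < length v\<close>
      unfolding occurs_at_def by simp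
  qed
  have "v = take d v @ take (length u) (drop d v) @ drop (length u) (drop d v)"
    by (simp only: append_take_drop_id)
  then have "v = take d v @ u @ drop (length u) (drop d v)" by (simp only: u_eq)
  then show ?thesis by auto
qed

section \<open>Cyclic strings and occurrence counts\<close>

lemma cyclic_orbit:
  assumes "is_cyclic S" "f \<in> S"
  shows "S = range (shift f)" and "\<exists>p>0. periodic p f"
proof -
  obtain g p where g: "p > 0" "periodic p g" "S = range (shift g)"
    using assms(1) unfolding is_cyclic_def periodic_def by blast
  then obtain j where j: "f = shift g j" using assms(2) by blast
  have "shift g k = shift f (k - j)" for k using j by simp
  then have "range (shift g) \<subseteq> range (shift f)" by blast
  moreover have "range (shift f) \<subseteq> range (shift g)" using j by auto
  ultimately show "S = range (shift f)" using g(3) by blast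
  have "periodic p f" using g(2) j by (simp add: periodic_shift)
  with g(1) show "\<exists>p>0. periodic p f" by blast
qed

lemma cyclic_shift_closed: "is_cyclic S \<Longrightarrow> f \<in> S \<Longrightarrow> shift f k \<in> S"
  using cyclic_orbit(1) by blast

lemma cyclic_eqI: "is_cyclic S \<Longrightarrow> is_cyclic T \<Longrightarrow> f \<in> S \<Longrightarrow> f \<in> T \<Longrightarrow> S = T"
  using cyclic_orbit(1) by metis

lemma cyclic_eq_shift_image:
  assumes "is_cyclic S" "f \<in> S" "periodic p f" "p > 0"
  shows "S = shift f ` {0..<p}"
proof
  show "S \<subseteq> shift f ` {0..<p}"
  proof
    fix g assume "g \<in> S"
    then obtain j where "g = shift f (j mod p)"
      using cyclic_orbit(1)[OF assms(1,2)] periodic_mod[OF assms(3)] by auto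
    with assms(4) show "g \<in> shift f ` {0..<p}" by auto
  qed
  show "shift f ` {0..<p} \<subseteq> S" using cyclic_shift_closed[OF assms(1,2)] by blast
qed

lemma cyclic_finite:
  assumes "is_cyclic S"
  shows "finite S"
proof -
  obtain f where f: "f \<in> S" using assms unfolding is_cyclic_def by blast
  then obtain p where "periodic p f" "p > 0" using cyclic_orbit(2)[OF assms] by blast
  then show ?thesis
    using cyclic_eq_shift_image[OF assms f] by (metis finite_atLeastLessThan_int finite_imageI)
qed

lemma rep_in: "is_cyclic S \<Longrightarrow> rep S \<in> S"
  unfolding is_cyclic_def rep_def by (auto simp: some_in_eq)

lemma per_least:
  assumes "periodic p f" "p > 0"
  shows "per f > 0" and "periodic (int (per f)) f"
proof -
  have "\<exists>q::nat. q > 0 \<and> (\<forall>i. f (i + int q) = f i)"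
    using assms unfolding periodic_def by (intro exI[of _ "nat p"]) simp
  from LeastI_ex[OF this] show "per f > 0" "periodic (int (per f)) f"
    unfolding per_def periodic_def by auto
qed

lemma inj_on_shift_per: "inj_on (shift f) {0..<int (per f)}"
proof (rule linorder_inj_onI')
  fix i j assume "i \<in> {0..<int (per f)}" "j \<in> {0..<int (per f)}" "i < j"
  then have "nat (j - i) < per f" "nat (j - i) > 0" by auto
  then have "\<not> periodic (int (nat (j - i))) f"
    using not_less_Least[of "nat (j - i)" "\<lambda>q. q > 0 \<and> periodic (int q) f"]
    unfolding per_def periodic_def by blast
  with \<open>i < j\<close> have "\<not> periodic (j - i) f" by simp
  then show "shift f i \<noteq> shift f j" by (simp add: shift_eq_shift_iff)
qed

text \<open>An occurrence of \<open>u\<close> in \<open>S\<close> is represented by the element of \<open>S\<close> that has it at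
  position 0; the least period in \<^const>\<open>occ_fin\<close> is what makes this a bijection.\<close>

definition aligned :: "(int \<Rightarrow> 'a) set \<Rightarrow> 'a list \<Rightarrow> (int \<Rightarrow> 'a) set" where
  "aligned S u = {w \<in> S. occurs_at u w 0}"

lemma occ_fin_Cyc_eq_card_aligned:
  assumes "is_cyclic S"
  shows "occ_fin u (Cyc S) = card (aligned S u)"
proof -
  define g where "g = rep S"
  define I where "I = {i. 0 \<le> i \<and> i < int (per g) \<and> occurs_at u g i}"
  have g: "g \<in> S" using rep_in[OF assms] unfolding g_def .
  then obtain p where "p > 0" "periodic p g" using cyclic_orbit(2)[OF assms] by blast
  then have "S = shift g ` {0..<int (per g)}"
    using cyclic_eq_shift_image[OF assms g] per_least by (metis of_nat_0_less_iff)
  then have "aligned S u = shift g ` I"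
    unfolding aligned_def I_def by (auto simp: occurs_at_shift)
  moreover have "inj_on (shift g) I"
    using inj_on_shift_per by (rule inj_on_subset) (auto simp: I_def)
  ultimately show ?thesis by (simp add: card_image I_def g_def)
qed

declare occ_fin.simps(2) [simp del] \<comment> \<open>counts in cyclic strings are taken via \<open>aligned\<close>\<close>

lemma finite_aligned: "is_cyclic S \<Longrightarrow> finite (aligned S u)"
  unfolding aligned_def by (rule finite_subset[OF _ cyclic_finite]) auto

lemma card_aligned_le:
  assumes "is_cyclic S" "\<And>w. w \<in> aligned S v \<Longrightarrow> occurs_at u w c"
  shows "card (aligned S v) \<le> card (aligned S u)"
proof (rule card_inj_on_le)
  show "inj_on (\<lambda>w. shift w c) (aligned S v)" by (rule inj_onI) (simp add: shift_inject)
  show "(\<lambda>w. shift w c) ` aligned S v \<subseteq> aligned S u"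
    using assms by (auto simp: aligned_def occurs_at_shift cyclic_shift_closed)
qed (rule finite_aligned[OF assms(1)])

lemma card_aligned_superstring_less:
  assumes "is_cyclic S" "x \<in> aligned S u" "p < length (xs @ u @ ys)"
    and "x (int p - int (length xs)) \<noteq> (xs @ u @ ys) ! p"
  shows "card (aligned S (xs @ u @ ys)) < card (aligned S u)"
proof -
  let ?v = "xs @ u @ ys" and ?c = "int (length xs)"
  have "card (aligned S ?v) = card ((\<lambda>w. shift w ?c) ` aligned S ?v)"
    by (rule card_image[symmetric], rule inj_onI) (simp add: shift_inject)
  also have "\<dots> < card (aligned S u)"
  proof (rule psubset_card_mono[OF finite_aligned[OF assms(1)]])
    have "occurs_at u w ?c" if "w \<in> aligned S ?v" for w
      using occurs_at_trans[OF occurs_at_list_middle[of u xs ys], of w 0] that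
      by (simp add: aligned_def)
    then have "(\<lambda>w. shift w ?c) ` aligned S ?v \<subseteq> aligned S u"
      using assms(1) by (auto simp: aligned_def occurs_at_shift cyclic_shift_closed)
    moreover have "x \<notin> (\<lambda>w. shift w ?c) ` aligned S ?v"
    proof
      assume "x \<in> (\<lambda>w. shift w ?c) ` aligned S ?v"
      then obtain w where "occurs_at ?v w 0" "x = shift w ?c" by (auto simp: aligned_def)
      then have "x (int p - ?c) = ?v ! p"
        using assms(3) by (simp add: shift_apply occurs_at_def)
      with assms(4) show False by simp
    qed
    ultimately show "(\<lambda>w. shift w ?c) ` aligned S ?v \<subset> aligned S u" using assms(2) by blast
  qed
  finally show ?thesis .
qed

definition aligned_in :: "(int \<Rightarrow> 'a) set set \<Rightarrow> 'a list \<Rightarrow> (int \<Rightarrow> 'a) set" where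
  "aligned_in C s = (\<Union>S\<in>C. aligned S s)"

lemma aligned_inI:
  "chromosome_set C \<Longrightarrow> S \<in> C \<Longrightarrow> f \<in> S \<Longrightarrow> occurs_at s f i \<Longrightarrow> shift f i \<in> aligned_in C s"
  unfolding aligned_in_def aligned_def chromosome_set_def
  using cyclic_shift_closed by (fastforce simp: occurs_at_shift)

lemma occ_Fin_eq_card_aligned:
  "chromosome_set C \<Longrightarrow> S \<in> C \<Longrightarrow> occ (Fin u) S = card (aligned S u)"
  unfolding chromosome_set_def by (metis occ.simps(1) occ_fin_Cyc_eq_card_aligned)

lemma MES_CycI: "is_cyclic T \<Longrightarrow> T \<in> C \<Longrightarrow> MES C (Cyc T)"
  unfolding MES_def substr_of_def by (metis str.exhaust substr.simps(3,4) wf_str.simps(2))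

lemma MES_Fin_dominated_superstring:
  assumes "MES C (Fin u)" "wf_str t" "substr (Fin u) t" "\<And>S. S \<in> C \<Longrightarrow> occ (Fin u) S \<le> occ t S"
  shows "t = Fin u"
  using assms unfolding MES_def by (meson not_less)

definition is_MES_of :: "(int \<Rightarrow> 'a) set set \<Rightarrow> 'a list \<Rightarrow> 'a str \<Rightarrow> bool" where
  "is_MES_of C s m \<longleftrightarrow> MES C m \<and> occ_fin s m = 1 \<and>
     (\<forall>S\<in>C. \<forall>f\<in>S. \<forall>i. occurs_at s f i \<longrightarrow> extends_to s f i m)"

lemma extends_to_shift: "wf_str m \<Longrightarrow> extends_to s (shift f i) 0 m \<Longrightarrow> extends_to s f i m"
  by (cases m) (auto simp: occurs_at_shift dest: cyclic_shift_closed[where k = "- i"])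

lemma is_MES_ofI:
  assumes "chromosome_set C" "MES C m" "occ_fin s m = 1"
    and "\<And>w. w \<in> aligned_in C s \<Longrightarrow> extends_to s w 0 m"
  shows "is_MES_of C s m"
  unfolding is_MES_of_def
  using assms aligned_inI[OF assms(1)] extends_to_shift MES_def by blast

lemma is_MES_of_extends: "is_MES_of C s m \<Longrightarrow> w \<in> aligned_in C s \<Longrightarrow> extends_to s w 0 m"
  unfolding is_MES_of_def aligned_in_def aligned_def by auto

lemma is_MES_of_Fin_occurrence:
  assumes "is_MES_of C s (Fin u)"
  obtains k where "occurs_at_list s u k" "\<And>w. w \<in> aligned_in C s \<Longrightarrow> occurs_at u w (- int k)"
proof -
  have "card {k. occurs_at_list s u k} = 1" using assms unfolding is_MES_of_def by simp
  then obtain k where k: "{k. occurs_at_list s u k} = {k}" by (rule card_1_singletonE)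
  show ?thesis
  proof (rule that)
    show "occurs_at_list s u k" using k by blast
    show "occurs_at u w (- int k)" if "w \<in> aligned_in C s" for w
      using is_MES_of_extends[OF assms that] k by auto
  qed
qed

lemma is_MES_of_Cyc_unique_aligned:
  assumes "is_MES_of C s (Cyc T)" "w \<in> aligned_in C s" "w' \<in> aligned_in C s"
  shows "w = w'"
proof -
  have "is_cyclic T" "occ_fin s (Cyc T) = 1"
    using assms(1) unfolding is_MES_of_def MES_def by simp_all
  then have "card (aligned T s) = 1" by (simp only: occ_fin_Cyc_eq_card_aligned)
  moreover have "w \<in> aligned T s" "w' \<in> aligned T s"
    using assms is_MES_of_extends by (fastforce simp: aligned_in_def aligned_def)+
  ultimately show ?thesis by (metis card_1_singletonE singletonD)
qed

section \<open>A single aligned occurrence\<close>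

lemma single_aligned_is_MES_of:
  assumes C: "chromosome_set C" and W: "aligned_in C s = {w0}" and S0: "S0 \<in> C" "w0 \<in> S0"
  shows "is_MES_of C s (Cyc S0)"
proof (rule is_MES_ofI[OF C])
  have cyc: "is_cyclic S0" using C S0(1) unfolding chromosome_set_def by blast
  then show "MES C (Cyc S0)" using S0(1) by (rule MES_CycI)
  have "aligned S0 s = {w0}"
    using W S0 unfolding aligned_in_def aligned_def by blast
  then show "occ_fin s (Cyc S0) = 1" by (simp only: occ_fin_Cyc_eq_card_aligned[OF cyc]) simp
  show "extends_to s w 0 (Cyc S0)" if "w \<in> aligned_in C s" for w
    using that W S0(2) by simp
qed

lemma single_aligned_occ_le:
  assumes C: "chromosome_set C" and W: "aligned_in C s = {w0}" and S0: "S0 \<in> C" "w0 \<in> S0"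
    and k: "occurs_at_list s u k" and S: "S \<in> C"
  shows "occ (Fin u) S \<le> occ (Cyc S0) S"
proof -
  have "w = shift w0 (- int k) \<and> S = S0" if "w \<in> aligned S u" for w
  proof -
    have "occurs_at s w (int k)"
      using occurs_at_trans[OF k, of w 0] that by (simp add: aligned_def)
    then have "shift w (int k) = w0"
      using aligned_inI[OF C S] that W by (auto simp: aligned_def)
    then have w: "w = shift w0 (- int k)" by auto
    then have "w \<in> S0" using C S0 cyclic_shift_closed unfolding chromosome_set_def by blast
    with that S C S0(1) have "S = S0"
      using cyclic_eqI unfolding chromosome_set_def aligned_def by blast
    with w show ?thesis by blast
  qed
  then have "aligned S u \<subseteq> (if S0 = S then {shift w0 (- int k)} else {})" by auto
  then have "card (aligned S u) \<le> (if S0 = S then 1 else 0)"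
    by (cases "S0 = S") (auto simp: subset_singleton_iff)
  then show ?thesis using occ_Fin_eq_card_aligned[OF C S] by simp
qed

lemma single_aligned_MES_of_unique:
  assumes C: "chromosome_set C" and W: "aligned_in C s = {w0}" and S0: "S0 \<in> C" "w0 \<in> S0"
    and m: "is_MES_of C s m"
  shows "m = Cyc S0"
proof (cases m)
  case (Cyc T)
  have "w0 \<in> T" using is_MES_of_extends[OF m] W Cyc by simp
  moreover have "is_cyclic T" "is_cyclic S0"
    using m Cyc C S0(1) unfolding is_MES_of_def MES_def chromosome_set_def by auto
  ultimately show ?thesis using Cyc S0(2) cyclic_eqI by blast
next
  case (Fin u)
  then obtain k where k: "occurs_at_list s u k" "occurs_at u w0 (- int k)"
    using is_MES_of_extends[OF m] W by auto
  have "\<And>S. S \<in> C \<Longrightarrow> occ (Fin u) S \<le> occ (Cyc S0) S"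
    using single_aligned_occ_le[OF C W S0 k(1)] .
  moreover have "substr (Fin u) (Cyc S0)" using k(2) S0(2) by auto
  moreover have "MES C (Fin u)" using m Fin unfolding is_MES_of_def by blast
  moreover have "wf_str (Cyc S0)" using C S0(1) unfolding chromosome_set_def by simp
  ultimately have "Cyc S0 = Fin u" by (intro MES_Fin_dominated_superstring)
  then show ?thesis by simp
qed

section \<open>Several aligned occurrences\<close>

locale two_aligned =
  fixes C :: "(int \<Rightarrow> 'a) set set" and s :: "'a list" and w1 w2 :: "int \<Rightarrow> 'a"
  assumes chromosome: "chromosome_set C" and s_nonempty: "s \<noteq> []"
    and w1: "w1 \<in> aligned_in C s" and w2: "w2 \<in> aligned_in C s" and w1_neq_w2: "w1 \<noteq> w2"
begin

definition agrees_at :: "int \<Rightarrow> bool" where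
  "agrees_at a \<longleftrightarrow> (\<forall>w\<in>aligned_in C s. \<forall>w'\<in>aligned_in C s. w a = w' a)"

lemma agrees_atI: "(\<And>w. w \<in> aligned_in C s \<Longrightarrow> w a = x) \<Longrightarrow> agrees_at a"
  unfolding agrees_at_def by auto

lemma not_agrees_atD: "\<not> agrees_at a \<Longrightarrow> \<exists>w\<in>aligned_in C s. w a \<noteq> x"
  using agrees_atI by blast

lemma agrees_at_shift:
  "(\<And>w. w \<in> aligned_in C s \<Longrightarrow> shift w c \<in> aligned_in C s) \<Longrightarrow> agrees_at a \<Longrightarrow> agrees_at (a + c)"
  unfolding agrees_at_def by (metis shift_apply)

lemma aligned_in_periodic: "w \<in> aligned_in C s \<Longrightarrow> \<exists>p>0. periodic p w"
  using chromosome cyclic_orbit(2) unfolding aligned_in_def aligned_def chromosome_set_def by blast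

lemma ex_disagreement_right: "\<exists>n::nat. \<not> agrees_at (int n)"
proof (rule ccontr)
  assume "\<nexists>n::nat. \<not> agrees_at (int n)"
  then have "\<forall>a\<ge>0. w1 a = w2 a" using w1 w2 unfolding agrees_at_def by (metis nonneg_int_cases)
  then show False
    using aligned_in_periodic[OF w1] aligned_in_periodic[OF w2] periodic_eqI_ge w1_neq_w2 by metis
qed

lemma ex_disagreement_left: "\<exists>n::nat. \<not> agrees_at (- int n - 1)"
proof (rule ccontr)
  assume none: "\<nexists>n::nat. \<not> agrees_at (- int n - 1)"
  have "w1 a = w2 a" if "a < 0" for a
  proof -
    from that have "a = - int (nat (- a - 1)) - 1" by simp
    then show ?thesis using none w1 w2 unfolding agrees_at_def by metis
  qed
  then show False
    using aligned_in_periodic[OF w1] aligned_in_periodic[OF w2] periodic_eqI_less w1_neq_w2 by metis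
qed

definition r :: nat where "r = (LEAST n. \<not> agrees_at (int n))"

definition l :: nat where "l = (LEAST n. \<not> agrees_at (- int n - 1))"

lemma disagrees_at_r: "\<not> agrees_at (int r)"
  unfolding r_def by (rule LeastI_ex[OF ex_disagreement_right])

lemma disagrees_at_l: "\<not> agrees_at (- int l - 1)"
  unfolding l_def by (rule LeastI_ex[OF ex_disagreement_left])

lemma agrees_at_window:
  assumes "- int l \<le> a" "a < int r"
  shows "agrees_at a"
proof (cases "a \<ge> 0")
  case True
  then have "nat a < r" "a = int (nat a)" using assms by auto
  then show ?thesis
    using not_less_Least[of "nat a" "\<lambda>n. \<not> agrees_at (int n)"] unfolding r_def by metis
next
  case False
  then have "nat (- a - 1) < l" "a = - int (nat (- a - 1)) - 1" using assms by auto
  then show ?thesis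
    using not_less_Least[of "nat (- a - 1)" "\<lambda>n. \<not> agrees_at (- int n - 1)"]
    unfolding l_def by metis
qed

lemma length_s_le_r: "length s \<le> r"
proof (rule ccontr)
  assume "\<not> length s \<le> r"
  then have "agrees_at (int r)"
    by (intro agrees_atI[of _ "s ! r"]) (auto simp: aligned_in_def aligned_def occurs_at_def)
  with disagrees_at_r show False by simp
qed

definition core :: "'a list" where
  "core = map (\<lambda>j. w1 (int j - int l)) [0..<l + r]"

lemma length_core: "length core = l + r"
  unfolding core_def by simp

lemma occurs_at_core: "w \<in> aligned_in C s \<Longrightarrow> occurs_at core w (- int l)"
  unfolding occurs_at_def
proof (intro allI impI)
  fix j assume "w \<in> aligned_in C s" "j < length core"
  moreover have "agrees_at (int j - int l)"
    using \<open>j < length core\<close> length_core by (intro agrees_at_window) auto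
  ultimately show "w (- int l + int j) = core ! j"
    using w1 length_core unfolding agrees_at_def core_def by simp
qed

lemma occurs_at_list_s_core: "occurs_at_list s core l"
  unfolding occurs_at_list_def
proof (intro conjI allI impI)
  show "l + length s \<le> length core" using length_core length_s_le_r by simp
  fix j assume "j < length s"
  then have "core ! (l + j) = w1 (int j)" using length_s_le_r unfolding core_def by simp
  with \<open>j < length s\<close> w1 show "core ! (l + j) = s ! j"
    unfolding aligned_in_def aligned_def occurs_at_def by auto
qed

lemma occurs_at_list_s_core_unique:
  assumes k: "occurs_at_list s core k"
  shows "k = l"
proof (rule ccontr)
  assume "k \<noteq> l"
  have shift_aligned: "shift w (int k - int l) \<in> aligned_in C s" if w: "w \<in> aligned_in C s" for w
  proof -
    obtain S where "S \<in> C" "w \<in> S" using w unfolding aligned_in_def aligned_def by blast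
    moreover have "occurs_at s w (- int l + int k)" using occurs_at_trans[OF k occurs_at_core[OF w]] .
    ultimately show ?thesis using aligned_inI[OF chromosome] by (simp add: algebra_simps)
  qed
  have "k + length s \<le> l + r" using k length_core unfolding occurs_at_list_def by simp
  then consider "l < k" "k - l < r" | "k < l" using \<open>k \<noteq> l\<close> s_nonempty
    by (cases s) (auto simp: nat_neq_iff)
  then show False
  proof cases
    case 1
    then have "agrees_at (int r - (int k - int l))" by (intro agrees_at_window) auto
    from agrees_at_shift[OF shift_aligned this] have "agrees_at (int r)" by simp
    with disagrees_at_r show False ..
  next
    case 2
    then have "agrees_at (- int k - 1)" using length_s_le_r s_nonempty by (intro agrees_at_window) auto
    moreover have "- int k - 1 + (int k - int l) = - int l - 1" by simp
    ultimately have "agrees_at (- int l - 1)" using agrees_at_shift[OF shift_aligned] by metis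
    with disagrees_at_l show False ..
  qed
qed

lemma occ_fin_s_core: "occ_fin s (Fin core) = 1"
proof -
  have "{k. occurs_at_list s core k} = {l}"
    using occurs_at_list_s_core occurs_at_list_s_core_unique by blast
  then show ?thesis by simp
qed

lemma aligned_core: "S \<in> C \<Longrightarrow> w \<in> aligned S s \<Longrightarrow> shift w (- int l) \<in> aligned S core"
  using occurs_at_core chromosome cyclic_shift_closed
  unfolding aligned_in_def aligned_def chromosome_set_def by (fastforce simp: occurs_at_shift)

lemma cyclic_superstring_fewer: "\<exists>S\<in>C. occ (Cyc T) S < occ (Fin core) S"
proof -
  obtain S1 S2 where S: "S1 \<in> C" "w1 \<in> aligned S1 s" "S2 \<in> C" "w2 \<in> aligned S2 s"
    using w1 w2 unfolding aligned_in_def by blast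
  have cyc: "is_cyclic S1" "is_cyclic S2" using S chromosome unfolding chromosome_set_def by auto
  show ?thesis
  proof (cases "S1 = S2")
    case True
    have "shift w1 (- int l) \<noteq> shift w2 (- int l)" using w1_neq_w2 by (simp add: shift_inject)
    moreover have "{shift w1 (- int l), shift w2 (- int l)} \<subseteq> aligned S1 core"
      using aligned_core S True by blast
    then have "card {shift w1 (- int l), shift w2 (- int l)} \<le> card (aligned S1 core)"
      by (rule card_mono[OF finite_aligned[OF cyc(1)]])
    ultimately have "occ (Cyc T) S1 < occ (Fin core) S1"
      using occ_Fin_eq_card_aligned[OF chromosome S(1)] by simp
    then show ?thesis using S(1) by blast
  next
    case False
    have pos: "0 < occ (Fin core) S" if "S \<in> C" "w \<in> aligned S s" "is_cyclic S" for S w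
      unfolding occ_Fin_eq_card_aligned[OF chromosome that(1)]
      using aligned_core[OF that(1,2)] finite_aligned[OF that(3)] by (auto simp: card_gt_0_iff)
    show ?thesis
    proof (cases "T = S1")
      case True
      then show ?thesis using pos[OF S(3,4) cyc(2)] S(3) False by force
    next
      case False
      then show ?thesis using pos[OF S(1,2) cyc(1)] S(1) by force
    qed
  qed
qed

lemma finite_superstring_fewer:
  assumes "xs \<noteq> [] \<or> ys \<noteq> []"
  shows "\<exists>S\<in>C. occ (Fin (xs @ core @ ys)) S < occ (Fin core) S"
proof -
  let ?v = "xs @ core @ ys"
  \<comment> \<open>position \<open>p\<close> of the superstring sits just outside the window\<close>
  obtain p a where pa: "p < length ?v" "int p - int (length xs) - int l = a" "\<not> agrees_at a"
  proof (cases "ys = []")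
    case False
    then show ?thesis
      using that[of "length xs + l + r" "int r"] disagrees_at_r length_core by simp
  next
    case True
    then show ?thesis
      using assms that[of "length xs - 1" "- int l - 1"] disagrees_at_l by (cases xs) auto
  qed
  obtain w where w: "w \<in> aligned_in C s" "w a \<noteq> ?v ! p" using not_agrees_atD[OF pa(3)] by blast
  then obtain S where S: "S \<in> C" "w \<in> aligned S s" unfolding aligned_in_def by blast
  have "is_cyclic S" using S(1) chromosome unfolding chromosome_set_def by blast
  moreover have "shift w (- int l) (int p - int (length xs)) \<noteq> ?v ! p"
    using w(2) pa(2) by (simp add: shift_apply)
  ultimately have "card (aligned S ?v) < card (aligned S core)"
    using card_aligned_superstring_less aligned_core[OF S] pa(1) by blast
  then have "occ (Fin ?v) S < occ (Fin core) S"
    by (simp only: occ_Fin_eq_card_aligned[OF chromosome S(1)])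
  with S(1) show ?thesis by blast
qed

lemma MES_core: "MES C (Fin core)"
  unfolding MES_def
proof (intro conjI allI impI)
  show "wf_str (Fin core)" by simp
  obtain S where "S \<in> C" "w1 \<in> S" using w1 unfolding aligned_in_def aligned_def by blast
  then show "substr_of (Fin core) C"
    unfolding substr_of_def using occurs_at_core[OF w1] by auto
  fix t assume t: "wf_str t \<and> t \<noteq> Fin core \<and> substr (Fin core) t"
  show "\<exists>S\<in>C. occ t S < occ (Fin core) S"
  proof (cases t)
    case (Fin v)
    then obtain xs ys where "v = xs @ core @ ys" using t by auto
    moreover from this have "xs \<noteq> [] \<or> ys \<noteq> []" using t Fin by auto
    ultimately show ?thesis using finite_superstring_fewer Fin by blast
  qed (use cyclic_superstring_fewer in blast)
qed

lemma is_MES_of_core: "is_MES_of C s (Fin core)"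
  using chromosome MES_core occ_fin_s_core occurs_at_list_s_core occurs_at_core
  by (intro is_MES_ofI) auto

lemma substr_core_if_aligned:
  assumes k: "occurs_at_list s u k" and u_at: "\<And>w. w \<in> aligned_in C s \<Longrightarrow> occurs_at u w (- int k)"
  shows "substr (Fin u) (Fin core)"
proof -
  have u_nth: "w (- int k + int j) = u ! j" if "w \<in> aligned_in C s" "j < length u" for w j
    using u_at[OF that(1)] that(2) unfolding occurs_at_def by blast
  have "k + length s \<le> length u" using k unfolding occurs_at_list_def by auto
  have "k \<le> l"
  proof (rule ccontr)
    assume "\<not> k \<le> l"
    then have "k - l - 1 < length u" using \<open>k + length s \<le> length u\<close> by simp
    then have "agrees_at (- int k + int (k - l - 1))"
      using u_nth by (intro agrees_atI[of _ "u ! (k - l - 1)"])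
    moreover have "- int k + int (k - l - 1) = - int l - 1" using \<open>\<not> k \<le> l\<close> by simp
    ultimately have "agrees_at (- int l - 1)" by (simp only:)
    with disagrees_at_l show False ..
  qed
  moreover have "length u \<le> k + r"
  proof (rule ccontr)
    assume "\<not> length u \<le> k + r"
    then have "agrees_at (- int k + int (k + r))"
      using u_nth[of _ "k + r"] by (intro agrees_atI[of _ "u ! (k + r)"]) simp
    then have "agrees_at (int r)" by simp
    with disagrees_at_r show False ..
  qed
  ultimately show ?thesis
    using occurs_at_nested_substr[OF u_at[OF w1] occurs_at_core[OF w1]] length_core by simp
qed

lemma occ_le_core_if_aligned:
  assumes k: "occurs_at_list s u k" and u_at: "\<And>w. w \<in> aligned_in C s \<Longrightarrow> occurs_at u w (- int k)"
    and S: "S \<in> C"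
  shows "occ (Fin u) S \<le> occ (Fin core) S"
proof -
  have "is_cyclic S" using S chromosome unfolding chromosome_set_def by blast
  moreover have "occurs_at core w (int k - int l)" if "w \<in> aligned S u" for w
  proof -
    have "occurs_at s w (int k)"
      using occurs_at_trans[OF k, of w 0] that by (simp add: aligned_def)
    then have "shift w (int k) \<in> aligned_in C s"
      using aligned_inI[OF chromosome S] that by (simp add: aligned_def)
    from occurs_at_core[OF this] show ?thesis by (simp add: occurs_at_shift)
  qed
  ultimately show ?thesis
    unfolding occ_Fin_eq_card_aligned[OF chromosome S] by (rule card_aligned_le)
qed

lemma MES_of_eq_core:
  assumes m: "is_MES_of C s m"
  shows "m = Fin core"
proof (cases m)
  case (Cyc T)
  then show ?thesis using is_MES_of_Cyc_unique_aligned[OF _ w1 w2] m w1_neq_w2 by blast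
next
  case (Fin u)
  then obtain k where "occurs_at_list s u k" "\<And>w. w \<in> aligned_in C s \<Longrightarrow> occurs_at u w (- int k)"
    using is_MES_of_Fin_occurrence m by blast
  then have "substr (Fin u) (Fin core)" "\<And>S. S \<in> C \<Longrightarrow> occ (Fin u) S \<le> occ (Fin core) S"
    using substr_core_if_aligned occ_le_core_if_aligned by blast+
  moreover have "MES C (Fin u)" using m Fin unfolding is_MES_of_def by blast
  ultimately have "Fin core = Fin u" by (intro MES_Fin_dominated_superstring) simp_all
  then show ?thesis using Fin by simp
qed

end

theorem theorem10:
  fixes C :: "(int \<Rightarrow> 'a::finite) set set" and s :: "'a list"
  assumes "chromosome_set C"
    and "s \<noteq> []"
    and "substr_of (Fin s) C"
  shows "\<exists>!m. MES C m \<and> occ_fin s m = 1 \<and>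
           (\<forall>S\<in>C. \<forall>f\<in>S. \<forall>i. occurs_at s f i \<longrightarrow> extends_to s f i m)"
proof -
  obtain S f i where S: "S \<in> C" "f \<in> S" "occurs_at s f i"
    using assms(3) unfolding substr_of_def by auto
  have w0: "shift f i \<in> aligned_in C s" "shift f i \<in> S"
    using aligned_inI[OF assms(1) S] cyclic_shift_closed[OF _ S(2)] assms(1) S(1)
    unfolding chromosome_set_def by auto
  have "\<exists>!m. is_MES_of C s m"
  proof (cases "aligned_in C s = {shift f i}")
    case True
    then show ?thesis
      using single_aligned_is_MES_of single_aligned_MES_of_unique assms(1) S(1) w0(2) by metis
  next
    case False
    then obtain w where "w \<in> aligned_in C s" "w \<noteq> shift f i" using w0(1) by blast
    then interpret two_aligned C s "shift f i" w
      using assms(1,2) w0(1) by unfold_locales auto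
    show ?thesis using is_MES_of_core MES_of_eq_core by blast
  qed
  then show ?thesis unfolding is_MES_of_def .
qed

end
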